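(* If a sequent $\Gamma\Rightarrow\Delta$ is provable in $\mathsf{Grz}_\infty$, then $\Gamma\Rightarrow\Delta$ has a slim $\infty$-proof in $\mathsf{Grz}_\infty$.
   Context: Formulas are built from $\bot$ and atomic propositions using $\to$ and $\Box$. A sequent is $\Gamma\Rightarrow\Delta$ with $\Gamma,\Delta$ finite multisets of formulas; $\Box\Pi$ denotes the multiset $\{\Box B:B\in\Pi\}$. The calculus $\mathsf{Grz}_\infty$ has initial sequents $\Gamma,p\Rightarrow p,\Delta$ ($p$ atomic) and $\Gamma,\bot\Rightarrow\Delta$, and rules: $(\to_L)$ from $\Gamma,B\Rightarrow\Delta$ and $\Gamma\Rightarrow A,\Delta$ infer $\Gamma,A\to B\Rightarrow\Delta$; $(\to_R)$ from $\Gamma,A\Rightarrow B,\Delta$ infer $\Gamma\Rightarrow A\to B,\Delta$; $(\mathsf{refl})$ from $\Gamma,B,\Box B\Rightarrow\Delta$ infer $\Gamma,\Box B\Rightarrow\Delta$; $(\Box)$ from left premise $\Gamma,\Box\Pi\Rightarrow A,\Delta$ and right premise $\Box\Pi\Rightarrow A$ infer $\Gamma,\Box\Pi\Rightarrow\Box A,\Delta$. An $\infty$-proof is a possibly infinite tree of sequents built by these rules, with leaves labelled by initial sequents, in which every infinite branch passes through a right premise of $(\Box)$ infinitely often; a sequent is provable if it labels the root of an $\infty$-proof. An application of $(\Box)$ is slim if the multiset $\Pi$ in it is a set (contains no formula more than once); an $\infty$-proof is slim if every application of $(\Box)$ in it is slim. *)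

theory Defs
  imports Main "HOL-Library.Multiset"
begin

datatype 'a fm = Bot | At 'a | Imp "'a fm" "'a fm" | Box "'a fm"

type_synonym 'a sequent = "'a fm multiset \<times> 'a fm multiset"

datatype 'a rule = InitAt | InitBot | ImpL | ImpR | Refl | BoxRule "'a fm multiset"

inductive rstep :: "'a rule \<Rightarrow> 'a sequent \<Rightarrow> 'a sequent list \<Rightarrow> bool" where
  init_at: "rstep InitAt (add_mset (At p) \<Gamma>, add_mset (At p) \<Delta>) []"
| init_bot: "rstep InitBot (add_mset Bot \<Gamma>, \<Delta>) []"
| imp_l: "rstep ImpL (add_mset (Imp A B) \<Gamma>, \<Delta>) [(add_mset B \<Gamma>, \<Delta>), (\<Gamma>, add_mset A \<Delta>)]"
| imp_r: "rstep ImpR (\<Gamma>, add_mset (Imp A B) \<Delta>) [(add_mset A \<Gamma>, add_mset B \<Delta>)]"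
| refl: "rstep Refl (add_mset (Box B) \<Gamma>, \<Delta>) [(add_mset B (add_mset (Box B) \<Gamma>), \<Delta>)]"
| box: "rstep (BoxRule \<Pi>) (\<Gamma> + image_mset Box \<Pi>, add_mset (Box A) \<Delta>)
          [(\<Gamma> + image_mset Box \<Pi>, add_mset A \<Delta>), (image_mset Box \<Pi>, {#A#})]"

codatatype 'a ptree = PNode (seq: "'a sequent") (rl: "'a rule") (subs: "'a ptree list")

fun subtree :: "'a ptree \<Rightarrow> nat list \<Rightarrow> 'a ptree" where
  "subtree t [] = t"
| "subtree t (i # is) = subtree (subs t ! i) is"

inductive_set nodes :: "'a ptree \<Rightarrow> 'a ptree set" for t where
  root: "t \<in> nodes t"
| child: "s \<in> nodes t \<Longrightarrow> u \<in> set (subs s) \<Longrightarrow> u \<in> nodes t"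

definition inf_branch :: "'a ptree \<Rightarrow> (nat \<Rightarrow> nat) \<Rightarrow> bool" where
  "inf_branch t f \<longleftrightarrow> (\<forall>n. f n < length (subs (subtree t (map f [0..<n]))))"

text \<open>The branch passes through a right premise of the box rule at step n:
  node n is a box-rule application and node n+1 is its right premise.\<close>
definition right_box_step :: "'a ptree \<Rightarrow> (nat \<Rightarrow> nat) \<Rightarrow> nat \<Rightarrow> bool" where
  "right_box_step t f n \<longleftrightarrow>
     (\<exists>\<Pi>. rl (subtree t (map f [0..<n])) = BoxRule \<Pi>) \<and> f n = 1"

definition inf_proof :: "'a ptree \<Rightarrow> bool" where
  "inf_proof t \<longleftrightarrow>
     (\<forall>s \<in> nodes t. rstep (rl s) (seq s) (map seq (subs s))) \<and>
     (\<forall>f. inf_branch t f \<longrightarrow> (\<exists>\<^sub>\<infinity>n. right_box_step t f n))"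

definition provable :: "'a sequent \<Rightarrow> bool" where
  "provable S \<longleftrightarrow> (\<exists>t. inf_proof t \<and> seq t = S)"

definition slim :: "'a ptree \<Rightarrow> bool" where
  "slim t \<longleftrightarrow> (\<forall>s \<in> nodes t. \<forall>\<Pi>. rl s = BoxRule \<Pi> \<longrightarrow> (\<forall>B. count \<Pi> B \<le> 1))"

end

theory Submission
  imports Defs
begin

text \<open>Call \<open>S'\<close> an enlargement of a sequent \<open>S\<close> if \<open>S'\<close> arises from \<open>S\<close> by weakening and by
  contracting boxed antecedent formulas. Every rule application with conclusion \<open>S\<close> can be
  mimicked at any enlargement \<open>S'\<close> by an application of the same rule whose premises enlarge
  the original ones. For the box rule one replaces \<open>\<Pi>\<close> by its underlying set \<open>\<Pi>'\<close>: \<open>\<box>\<Pi>'\<close> still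
  occurs in the enlarged antecedent, because contraction never deletes a boxed formula entirely,
  and \<open>\<box>\<Pi>' \<Rightarrow> A\<close> enlarges the right premise \<open>\<box>\<Pi> \<Rightarrow> A\<close>. Performing this
  corecursively along an \<open>\<infinity>\<close>-proof yields a slim tree of the same shape, so every infinite
  branch still passes through right premises of the box rule infinitely often.\<close>

fun is_box :: "'a fm \<Rightarrow> bool" where
  "is_box (Box _) = True"
| "is_box _ = False"

definition ant_le :: "'a fm multiset \<Rightarrow> 'a fm multiset \<Rightarrow> bool" where
  "ant_le \<Gamma> \<Gamma>' \<longleftrightarrow> filter_mset (\<lambda>F. \<not> is_box F) \<Gamma> \<subseteq># \<Gamma>' \<and> set_mset \<Gamma> \<subseteq> set_mset \<Gamma>'"

lemma ant_le_refl: "ant_le \<Gamma> \<Gamma>"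
  by (simp add: ant_le_def)

lemma ant_le_add_mset: "ant_le \<Gamma> \<Gamma>' \<Longrightarrow> ant_le (add_mset X \<Gamma>) (add_mset X \<Gamma>')"
  by (auto simp: ant_le_def intro: subset_mset.order_trans)

lemma ant_le_mem: "ant_le (add_mset X \<Gamma>) \<Gamma>' \<Longrightarrow> X \<in># \<Gamma>'"
  by (simp add: ant_le_def)

lemma ant_le_remove:
  assumes "ant_le (add_mset X \<Gamma>) \<Gamma>'" and "\<not> is_box X"
  shows "ant_le \<Gamma> (\<Gamma>' - {#X#})"
proof -
  have nonbox: "filter_mset (\<lambda>F. \<not> is_box F) \<Gamma> \<subseteq># \<Gamma>' - {#X#}"
    using assms by (simp add: ant_le_def insert_subset_eq_iff)
  have "F \<in># \<Gamma>' - {#X#}" if "F \<in># \<Gamma>" for F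
  proof (cases "is_box F")
    case True
    then have "F \<noteq> X" using assms(2) by auto
    then show ?thesis using that assms(1) by (auto simp: ant_le_def in_diff_count)
  next
    case False
    then show ?thesis using that nonbox by (auto dest: mset_subset_eqD)
  qed
  with nonbox show ?thesis by (auto simp: ant_le_def)
qed

lemma mset_set_subset_mset:
  assumes "finite A" and "A \<subseteq> set_mset M"
  shows "mset_set A \<subseteq># M"
  using subset_imp_msubset_mset_set[OF assms(2)] mset_set_set_mset_msubset
  by (rule subset_mset.order_trans) simp

lemma ant_le_boxes_subset:
  assumes "ant_le (\<Gamma> + image_mset Box \<Pi>) \<Gamma>'"
  shows "image_mset Box (mset_set (set_mset \<Pi>)) \<subseteq># \<Gamma>'"
proof -
  have "image_mset Box (mset_set (set_mset \<Pi>)) = mset_set (set_mset (image_mset Box \<Pi>))"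
    by (simp add: image_mset_mset_set inj_on_def)
  also have "\<dots> \<subseteq># \<Gamma>'"
    using assms by (intro mset_set_subset_mset) (auto simp: ant_le_def)
  finally show ?thesis .
qed

lemma ant_le_boxes_support: "ant_le (image_mset Box \<Pi>) (image_mset Box (mset_set (set_mset \<Pi>)))"
proof -
  have "filter_mset (\<lambda>F. \<not> is_box F) (image_mset Box \<Pi>) = {#}"
    by (induction \<Pi>) auto
  then show ?thesis unfolding ant_le_def by (simp only: empty_le) simp
qed

definition sequent_le :: "'a sequent \<Rightarrow> 'a sequent \<Rightarrow> bool" where
  "sequent_le S S' \<longleftrightarrow> ant_le (fst S) (fst S') \<and> snd S \<subseteq># snd S'"

lemma sequent_le_refl: "sequent_le S S"
  by (simp add: sequent_le_def ant_le_refl)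

fun is_box_rule :: "'a rule \<Rightarrow> bool" where
  "is_box_rule (BoxRule _) = True"
| "is_box_rule _ = False"

fun slim_rule :: "'a rule \<Rightarrow> bool" where
  "slim_rule (BoxRule \<Pi>) = (\<forall>B. count \<Pi> B \<le> 1)"
| "slim_rule _ = True"

lemma is_box_rule_iff: "is_box_rule r \<longleftrightarrow> (\<exists>\<Pi>. r = BoxRule \<Pi>)"
  by (cases r) auto

lemma slim_rule_iff: "slim_rule r \<longleftrightarrow> (\<forall>\<Pi>. r = BoxRule \<Pi> \<longrightarrow> (\<forall>B. count \<Pi> B \<le> 1))"
  by (cases r) auto

lemma rstep_simulation:
  assumes "rstep r (\<Gamma>, \<Delta>) ps" and "ant_le \<Gamma> \<Gamma>'" and "\<Delta> \<subseteq># \<Delta>'"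
  shows "\<exists>r' ps'. rstep r' (\<Gamma>', \<Delta>') ps' \<and> slim_rule r' \<and> list_all2 sequent_le ps ps'
           \<and> (is_box_rule r \<longleftrightarrow> is_box_rule r')"
  using assms(1)
proof cases
  case (init_at p \<Gamma>\<^sub>0 \<Delta>\<^sub>0)
  then have "At p \<in># \<Gamma>'" "At p \<in># \<Delta>'"
    using assms(2,3) ant_le_mem by (auto dest: mset_subset_eqD)
  then have "rstep InitAt (\<Gamma>', \<Delta>') []"
    by (metis rstep.init_at insert_DiffM)
  then show ?thesis using init_at by force
next
  case (init_bot \<Gamma>\<^sub>0)
  then have "rstep InitBot (\<Gamma>', \<Delta>') []"
    using assms(2) ant_le_mem by (metis rstep.init_bot insert_DiffM)
  then show ?thesis using init_bot by force
next
  case (imp_l A B \<Gamma>\<^sub>0)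
  define \<Gamma>\<^sub>1 where "\<Gamma>\<^sub>1 = \<Gamma>' - {#Imp A B#}"
  have "\<Gamma>' = add_mset (Imp A B) \<Gamma>\<^sub>1"
    using imp_l assms(2) unfolding \<Gamma>\<^sub>1_def by (metis ant_le_mem insert_DiffM)
  then have "rstep ImpL (\<Gamma>', \<Delta>') [(add_mset B \<Gamma>\<^sub>1, \<Delta>'), (\<Gamma>\<^sub>1, add_mset A \<Delta>')]"
    by (simp add: rstep.imp_l)
  moreover have "ant_le \<Gamma>\<^sub>0 \<Gamma>\<^sub>1"
    using imp_l assms(2) ant_le_remove unfolding \<Gamma>\<^sub>1_def by fastforce
  ultimately show ?thesis
    using imp_l assms(3) by (force simp: sequent_le_def ant_le_add_mset)
next
  case (imp_r A B \<Delta>\<^sub>0)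
  define \<Delta>\<^sub>1 where "\<Delta>\<^sub>1 = \<Delta>' - {#Imp A B#}"
  have "\<Delta>' = add_mset (Imp A B) \<Delta>\<^sub>1" and "\<Delta>\<^sub>0 \<subseteq># \<Delta>\<^sub>1"
    using imp_r assms(3) by (simp_all add: \<Delta>\<^sub>1_def insert_subset_eq_iff)
  moreover from this have "rstep ImpR (\<Gamma>', \<Delta>') [(add_mset A \<Gamma>', add_mset B \<Delta>\<^sub>1)]"
    by (simp add: rstep.imp_r)
  ultimately show ?thesis
    using imp_r assms(2) by (force simp: sequent_le_def ant_le_add_mset)
next
  case (refl B \<Gamma>\<^sub>0)
  define \<Gamma>\<^sub>1 where "\<Gamma>\<^sub>1 = \<Gamma>' - {#Box B#}"
  have "\<Gamma>' = add_mset (Box B) \<Gamma>\<^sub>1"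
    using refl assms(2) unfolding \<Gamma>\<^sub>1_def by (metis ant_le_mem insert_DiffM)
  then have "rstep Refl (\<Gamma>', \<Delta>') [(add_mset B \<Gamma>', \<Delta>')]"
    by (simp add: rstep.refl)
  then show ?thesis
    using refl assms by (force simp: sequent_le_def ant_le_add_mset)
next
  case (box \<Pi> \<Gamma>\<^sub>0 A \<Delta>\<^sub>0)
  define \<Pi>' where "\<Pi>' = mset_set (set_mset \<Pi>)"
  define \<Gamma>\<^sub>1 where "\<Gamma>\<^sub>1 = \<Gamma>' - image_mset Box \<Pi>'"
  define \<Delta>\<^sub>1 where "\<Delta>\<^sub>1 = \<Delta>' - {#Box A#}"
  have "\<Gamma>' = \<Gamma>\<^sub>1 + image_mset Box \<Pi>'"
    using box assms(2) ant_le_boxes_subset unfolding \<Gamma>\<^sub>1_def \<Pi>'_def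
    by (metis subset_mset.diff_add)
  moreover have "\<Delta>' = add_mset (Box A) \<Delta>\<^sub>1" and "\<Delta>\<^sub>0 \<subseteq># \<Delta>\<^sub>1"
    using box assms(3) by (simp_all add: \<Delta>\<^sub>1_def insert_subset_eq_iff)
  ultimately have "rstep (BoxRule \<Pi>') (\<Gamma>', \<Delta>')
      [(\<Gamma>', add_mset A \<Delta>\<^sub>1), (image_mset Box \<Pi>', {#A#})]"
    by (metis rstep.box)
  moreover have "slim_rule (BoxRule \<Pi>')"
    by (simp add: \<Pi>'_def count_mset_set')
  moreover have "ant_le (image_mset Box \<Pi>) (image_mset Box \<Pi>')"
    unfolding \<Pi>'_def by (rule ant_le_boxes_support)
  ultimately show ?thesis
    using box assms \<open>\<Delta>\<^sub>0 \<subseteq># \<Delta>\<^sub>1\<close> by (force simp: sequent_le_def)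
qed

definition correct_node :: "'a ptree \<Rightarrow> bool" where
  "correct_node s \<longleftrightarrow> rstep (rl s) (seq s) (map seq (subs s))"

definition slim_simulation :: "'a ptree \<Rightarrow> 'a sequent \<Rightarrow> 'a rule \<Rightarrow> 'a sequent list \<Rightarrow> bool" where
  "slim_simulation t S r' ps' \<longleftrightarrow> rstep r' S ps' \<and> slim_rule r'
     \<and> list_all2 sequent_le (map seq (subs t)) ps' \<and> (is_box_rule (rl t) \<longleftrightarrow> is_box_rule r')"

definition embed_step :: "'a ptree \<Rightarrow> 'a sequent \<Rightarrow> 'a rule \<times> 'a sequent list" where
  "embed_step t S = (SOME (r', ps'). slim_simulation t S r' ps')"

primcorec embed_tree :: "'a ptree \<Rightarrow> 'a sequent \<Rightarrow> 'a ptree" where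
  "embed_tree t S = PNode S (fst (embed_step t S))
     (map (\<lambda>p. embed_tree (fst p) (snd p)) (zip (subs t) (snd (embed_step t S))))"

lemma embed_step_spec:
  assumes "correct_node t" and "sequent_le (seq t) S"
  shows "slim_simulation t S (fst (embed_step t S)) (snd (embed_step t S))"
proof -
  obtain \<Gamma> \<Delta> \<Gamma>' \<Delta>' where "seq t = (\<Gamma>, \<Delta>)" "S = (\<Gamma>', \<Delta>')"
    by fastforce
  then have "\<exists>r' ps'. slim_simulation t S r' ps'"
    using rstep_simulation assms by (fastforce simp: correct_node_def sequent_le_def slim_simulation_def)
  then have "\<exists>p. case_prod (slim_simulation t S) p"
    by auto
  from someI_ex[OF this] show ?thesis
    by (simp add: embed_step_def case_prod_unfold)
qed

lemma
  assumes "correct_node t" and "sequent_le (seq t) S"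
  shows correct_node_embed_tree: "correct_node (embed_tree t S)"
    and slim_rule_embed_tree: "slim_rule (rl (embed_tree t S))"
    and is_box_rule_embed_tree: "is_box_rule (rl (embed_tree t S)) \<longleftrightarrow> is_box_rule (rl t)"
    and length_subs_embed_tree: "length (subs (embed_tree t S)) = length (subs t)"
proof -
  have sim: "slim_simulation t S (fst (embed_step t S)) (snd (embed_step t S))"
    using assms by (rule embed_step_spec)
  then have "length (snd (embed_step t S)) = length (subs t)"
    by (metis slim_simulation_def length_map list_all2_lengthD)
  then have "map seq (subs (embed_tree t S)) = snd (embed_step t S)"
    by (simp add: comp_def)
  with sim show "correct_node (embed_tree t S)" "slim_rule (rl (embed_tree t S))"
      "is_box_rule (rl (embed_tree t S)) \<longleftrightarrow> is_box_rule (rl t)"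
    by (simp_all add: correct_node_def slim_simulation_def)
  show "length (subs (embed_tree t S)) = length (subs t)"
    using \<open>length (snd (embed_step t S)) = length (subs t)\<close> by simp
qed

lemma embed_tree_child:
  assumes "correct_node t" and "sequent_le (seq t) S" and "i < length (subs t)"
  obtains S' where "subs (embed_tree t S) ! i = embed_tree (subs t ! i) S'"
    and "sequent_le (seq (subs t ! i)) S'"
proof -
  have "list_all2 sequent_le (map seq (subs t)) (snd (embed_step t S))"
    using embed_step_spec[OF assms(1,2)] by (simp add: slim_simulation_def)
  then show ?thesis
    using that assms(3) by (simp add: list_all2_conv_all_nth)
qed

lemma nodes_trans: "u \<in> nodes s \<Longrightarrow> s \<in> nodes t \<Longrightarrow> u \<in> nodes t"
  by (induction u rule: nodes.induct) (auto intro: nodes.child)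

lemma nth_subs_in_nodes: "i < length (subs t) \<Longrightarrow> subs t ! i \<in> nodes t"
  by (auto intro: nodes.child nodes.root)

lemma nodes_embed_tree:
  assumes "s \<in> nodes (embed_tree t S)" and "\<forall>u\<in>nodes t. correct_node u" and "sequent_le (seq t) S"
  shows "\<exists>u S'. u \<in> nodes t \<and> sequent_le (seq u) S' \<and> s = embed_tree u S'"
  using assms(1)
proof (induction s rule: nodes.induct)
  case root
  then show ?case using assms(3) nodes.root by blast
next
  case (child s v)
  then obtain u S' where u: "u \<in> nodes t" "sequent_le (seq u) S'" "s = embed_tree u S'"
    by blast
  then have "correct_node u" using assms(2) by blast
  from child(2) obtain i where "i < length (subs u)" "v = subs (embed_tree u S') ! i"
    using u(3) length_subs_embed_tree[OF \<open>correct_node u\<close> u(2)] by (metis in_set_conv_nth)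
  with embed_tree_child[OF \<open>correct_node u\<close> u(2)] show ?case
    using u(1) nodes_trans nth_subs_in_nodes by metis
qed

fun valid_path :: "'a ptree \<Rightarrow> nat list \<Rightarrow> bool" where
  "valid_path t [] = True"
| "valid_path t (i # is) \<longleftrightarrow> i < length (subs t) \<and> valid_path (subs t ! i) is"

lemma valid_path_snoc:
  "valid_path t (is @ [i]) \<longleftrightarrow> valid_path t is \<and> i < length (subs (subtree t is))"
  by (induction "is" arbitrary: t) auto

lemma inf_branch_iff_valid_paths: "inf_branch t f \<longleftrightarrow> (\<forall>n. valid_path t (map f [0..<n]))"
proof
  assume "inf_branch t f"
  show "\<forall>n. valid_path t (map f [0..<n])"
  proof
    fix n show "valid_path t (map f [0..<n])"
      using \<open>inf_branch t f\<close> by (induction n) (auto simp: inf_branch_def valid_path_snoc)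
  qed
next
  assume "\<forall>n. valid_path t (map f [0..<n])"
  then show "inf_branch t f"
    unfolding inf_branch_def by (metis valid_path_snoc map_append upt_Suc_append zero_le list.map)
qed

lemma subtree_in_nodes: "valid_path t is \<Longrightarrow> subtree t is \<in> nodes t"
  by (induction "is" arbitrary: t) (auto intro: nodes.root nodes_trans nth_subs_in_nodes)

lemma subtree_embed_tree:
  assumes "valid_path t is" and "\<forall>u\<in>nodes t. correct_node u" and "sequent_le (seq t) S"
  shows "\<exists>S'. subtree (embed_tree t S) is = embed_tree (subtree t is) S'
           \<and> sequent_le (seq (subtree t is)) S'"
  using assms
proof (induction "is" arbitrary: t S)
  case Nil
  then show ?case by (intro exI[of _ S]) simp
next
  case (Cons i "is")
  have "correct_node t"
    using Cons.prems(2) nodes.root by blast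
  moreover have "i < length (subs t)"
    using Cons.prems(1) by simp
  moreover from calculation obtain S\<^sub>i where "subs (embed_tree t S) ! i = embed_tree (subs t ! i) S\<^sub>i"
    and "sequent_le (seq (subs t ! i)) S\<^sub>i"
    using embed_tree_child Cons.prems(3) by blast
  moreover have "\<forall>u\<in>nodes (subs t ! i). correct_node u"
    using Cons.prems(2) nodes_trans nth_subs_in_nodes \<open>i < length (subs t)\<close> by blast
  ultimately show ?case
    using Cons.IH Cons.prems(1) by auto
qed

lemma valid_path_embed_tree:
  assumes "\<forall>u\<in>nodes t. correct_node u" and "sequent_le (seq t) S"
  shows "valid_path (embed_tree t S) is \<longleftrightarrow> valid_path t is"
  using assms
proof (induction "is" arbitrary: t S)
  case Nil
  then show ?case by simp
next
  case (Cons i "is")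
  have "correct_node t"
    using Cons.prems(1) nodes.root by blast
  show ?case
  proof (cases "i < length (subs t)")
    case True
    then obtain S\<^sub>i where "subs (embed_tree t S) ! i = embed_tree (subs t ! i) S\<^sub>i"
      and "sequent_le (seq (subs t ! i)) S\<^sub>i"
      using embed_tree_child \<open>correct_node t\<close> Cons.prems(2) by blast
    moreover have "\<forall>u\<in>nodes (subs t ! i). correct_node u"
      using Cons.prems(1) nodes_trans nth_subs_in_nodes True by blast
    ultimately show ?thesis
      using Cons.IH length_subs_embed_tree[OF \<open>correct_node t\<close> Cons.prems(2)] by auto
  next
    case False
    then show ?thesis
      using length_subs_embed_tree[OF \<open>correct_node t\<close> Cons.prems(2)] by simp
  qed
qed

lemma right_box_step_embed_tree:
  assumes "\<forall>u\<in>nodes t. correct_node u" and "sequent_le (seq t) S"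
    and "valid_path t (map f [0..<n])"
  shows "right_box_step (embed_tree t S) f n \<longleftrightarrow> right_box_step t f n"
proof -
  let ?u = "subtree t (map f [0..<n])"
  obtain S' where "subtree (embed_tree t S) (map f [0..<n]) = embed_tree ?u S'"
    and "sequent_le (seq ?u) S'"
    using subtree_embed_tree[OF assms(3,1,2)] by blast
  moreover have "correct_node ?u"
    using assms(1) subtree_in_nodes[OF assms(3)] by blast
  ultimately have "is_box_rule (rl (subtree (embed_tree t S) (map f [0..<n]))) \<longleftrightarrow> is_box_rule (rl ?u)"
    using is_box_rule_embed_tree by simp
  then show ?thesis
    unfolding right_box_step_def is_box_rule_iff[symmetric] by simp
qed

lemma
  assumes "inf_proof t" and "sequent_le (seq t) S"
  shows inf_proof_embed_tree: "inf_proof (embed_tree t S)"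
    and slim_embed_tree: "slim (embed_tree t S)"
proof -
  have correct: "\<forall>u\<in>nodes t. correct_node u"
    using assms(1) by (simp add: inf_proof_def correct_node_def)
  have nodes: "correct_node s \<and> slim_rule (rl s)" if "s \<in> nodes (embed_tree t S)" for s
    using nodes_embed_tree[OF that correct assms(2)] correct
      correct_node_embed_tree slim_rule_embed_tree by blast
  have "\<exists>\<^sub>\<infinity>n. right_box_step (embed_tree t S) f n" if "inf_branch (embed_tree t S) f" for f
  proof -
    have paths: "valid_path t (map f [0..<n])" for n
      using that valid_path_embed_tree[OF correct assms(2)] inf_branch_iff_valid_paths by blast
    then have "inf_branch t f"
      by (simp add: inf_branch_iff_valid_paths)
    then have "\<exists>\<^sub>\<infinity>n. right_box_step t f n"
      using assms(1) by (simp add: inf_proof_def)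
    then show ?thesis
      using right_box_step_embed_tree[OF correct assms(2) paths] by simp
  qed
  with nodes show "inf_proof (embed_tree t S)" "slim (embed_tree t S)"
    by (auto simp: inf_proof_def slim_def correct_node_def slim_rule_iff)
qed

theorem lemma8p4:
  fixes \<Gamma> \<Delta> :: "'a fm multiset"
  assumes "provable (\<Gamma>, \<Delta>)"
  shows "\<exists>t. inf_proof t \<and> slim t \<and> seq t = (\<Gamma>, \<Delta>)"
proof -
  obtain t where "inf_proof t" and "seq t = (\<Gamma>, \<Delta>)"
    using assms by (auto simp: provable_def)
  then show ?thesis
    using inf_proof_embed_tree slim_embed_tree sequent_le_refl embed_tree.sel(1) by metis
qed

end
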